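(* Let $f\colon\mathbb{R}^n\to\mathbb{R}$ be convex and differentiable with $\|\nabla f(x)-\nabla f(y)\|\le L\|x-y\|$ (Euclidean norm, $L>0$), with a minimizer $x_\star$, $f_\star=f(x_\star)$. Let $\theta_0=1$ and $\theta_{k+1}>0$ with $\theta_{k+1}^2-\theta_{k+1}=\theta_k^2$ for $k\ge0$. Given $x_0$, let $y_0=x_0$ and for $k\ge0$: $y_{k+1}=x_k-\frac1L\nabla f(x_k)$, $x_{k+1}=y_{k+1}+\frac{\theta_k-1}{\theta_{k+1}}(y_{k+1}-y_k)+\frac{\theta_k}{\theta_{k+1}}(y_{k+1}-x_k)$. Then for $k=1,2,\dots$, \[ f(y_k)-f_\star\le\frac{L\|x_0-x_\star\|^2}{4\theta_{k-1}^2}=\frac{L\|x_0-x_\star\|^2}{(k+\zeta)^2}-\frac{L\|x_0-x_\star\|^2\log k}{(k+\zeta)^3}+o\!\left(\frac1{k^3}\right), \] where $\zeta$ is the constant defined in the context.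
   Context: For this sequence $\{\theta_k\}$ the limit $\zeta:=\lim_{k\to\infty}\big(2\theta_k-k-1-\tfrac12\log k\big)$ exists (so $\theta_k=\frac{k+\zeta+1}{2}+\frac{\log k}{4}+o(1)$), with $\zeta\approx0.646$. $\log$ is the natural logarithm. *)

theory Defs
  imports "HOL-Analysis.Analysis" "HOL-Library.Landau_Symbols"
begin

definition fista_zeta :: "(nat \<Rightarrow> real) \<Rightarrow> real" where
  "fista_zeta \<theta> = lim (\<lambda>k. 2 * \<theta> k - real k - 1 - ln (real k) / 2)"

end

theory Submission
  imports Defs "HOL-Real_Asymp.Real_Asymp"
begin

(* The rate comes from a Lyapunov function. With gap i = f (x i) - f xs - |grad (x i)|^2 / (2 L) and
   z i = theta i x i - (theta i - 1) y i, the quantity theta i^2 gap i + L/4 |z (i+1) - xs|^2 does not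
   increase along the iteration: two instances of the interpolation inequality for L-smooth convex
   functions, weighted by theta (i+1)^2 - theta (i+1) = theta i^2 and by theta (i+1), combine exactly
   with the expansion of the distance term. A gradient step then gives f (y (i+1)) - f xs <= gap i.

   For the expansion, 2 theta (k+1) - 1 = sqrt (1 + 4 theta k^2), so the increments of
   2 theta k - k - 1 - (ln k)/2 are O(ln k / k^2) and hence summable. Thus
   2 theta (k-1) = k + zeta + (ln k)/2 + o(1), and expanding 1 / (2 theta (k-1))^2 around k + zeta
   leaves a remainder o(1/k^3). *)

section \<open>Smooth convex functions\<close>

lemma has_real_derivative_along_line:
  fixes f :: "'a::real_inner \<Rightarrow> real"
  assumes "\<And>z. (f has_derivative (\<lambda>h. grad z \<bullet> h)) (at z)"
  shows "((\<lambda>t. f (x + t *\<^sub>R d)) has_real_derivative grad (x + t *\<^sub>R d) \<bullet> d) (at t)"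
proof -
  have "((\<lambda>t. x + t *\<^sub>R d) has_derivative (\<lambda>s. s *\<^sub>R d)) (at t)"
    by (auto intro!: derivative_eq_intros)
  from has_derivative_compose[OF this assms]
  show ?thesis
    by (rule has_derivative_imp_has_field_derivative) (simp add: mult.commute)
qed

lemma lipschitz_gradient_upper_bound:
  fixes f :: "'a::real_inner \<Rightarrow> real"
  assumes grad: "\<And>z. (f has_derivative (\<lambda>h. grad z \<bullet> h)) (at z)"
    and lips: "\<And>a b. norm (grad a - grad b) \<le> L * norm (a - b)"
  shows "f y \<le> f x + grad x \<bullet> (y - x) + L / 2 * norm (y - x) ^ 2"
proof -
  define d where "d = y - x"
  define q where "q t = f (x + t *\<^sub>R d) - t * (grad x \<bullet> d) - L / 2 * t ^ 2 * norm d ^ 2" for t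
  have "q 1 \<le> q 0"
  proof (rule DERIV_nonpos_imp_nonincreasing[of 0 1 q])
    fix t :: real assume t: "0 \<le> t" "t \<le> 1"
    have "(grad (x + t *\<^sub>R d) - grad x) \<bullet> d \<le> norm (grad (x + t *\<^sub>R d) - grad x) * norm d"
      by (rule norm_cauchy_schwarz)
    also have "\<dots> \<le> L * norm (t *\<^sub>R d) * norm d"
      using lips[of "x + t *\<^sub>R d" x] by (simp add: mult_right_mono)
    also have "\<dots> = L * t * norm d ^ 2"
      using t by (simp add: power2_eq_square)
    finally have "grad (x + t *\<^sub>R d) \<bullet> d - grad x \<bullet> d - L / 2 * (2 * t) * norm d ^ 2 \<le> 0"
      by (simp add: inner_diff_left)
    moreover have "(q has_real_derivative
        grad (x + t *\<^sub>R d) \<bullet> d - grad x \<bullet> d - L / 2 * (2 * t) * norm d ^ 2) (at t)"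
      unfolding q_def by (auto intro!: derivative_eq_intros has_real_derivative_along_line[OF grad])
    ultimately show "\<exists>y. (q has_real_derivative y) (at t) \<and> y \<le> 0"
      by blast
  qed simp
  then show ?thesis
    by (simp add: q_def d_def)
qed

lemma gradient_step_decrease:
  fixes f :: "'a::real_inner \<Rightarrow> real"
  assumes grad: "\<And>z. (f has_derivative (\<lambda>h. grad z \<bullet> h)) (at z)"
    and lips: "\<And>a b. norm (grad a - grad b) \<le> L * norm (a - b)"
    and "L > 0"
  shows "f (x - (1 / L) *\<^sub>R grad x) \<le> f x - norm (grad x) ^ 2 / (2 * L)"
  using lipschitz_gradient_upper_bound[OF grad lips, of "x - (1 / L) *\<^sub>R grad x" x] \<open>L > 0\<close>
  by (simp only: power2_norm_eq_inner) (simp add: power2_eq_square field_simps)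

lemma convex_on_gradient_inequality:
  fixes f :: "'a::real_inner \<Rightarrow> real"
  assumes convex: "convex_on UNIV f"
    and grad: "\<And>z. (f has_derivative (\<lambda>h. grad z \<bullet> h)) (at z)"
  shows "f x + grad x \<bullet> (y - x) \<le> f y"
proof -
  define h where "h t = f (x + t *\<^sub>R (y - x))" for t
  have "convex_on UNIV h"
  proof (rule convex_onI)
    fix t a b :: real assume "0 < t" "t < 1"
    have "x + ((1 - t) *\<^sub>R a + t *\<^sub>R b) *\<^sub>R (y - x)
        = (1 - t) *\<^sub>R (x + a *\<^sub>R (y - x)) + t *\<^sub>R (x + b *\<^sub>R (y - x))"
      by (simp add: algebra_simps)
    with convex_onD[OF convex, of t "x + a *\<^sub>R (y - x)" "x + b *\<^sub>R (y - x)"] \<open>0 < t\<close> \<open>t < 1\<close>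
    show "h ((1 - t) *\<^sub>R a + t *\<^sub>R b) \<le> (1 - t) * h a + t * h b"
      by (simp add: h_def)
  qed simp
  moreover have "(h has_real_derivative grad x \<bullet> (y - x)) (at 0 within UNIV)"
    unfolding h_def using has_real_derivative_along_line[OF grad, of x "y - x" 0] by simp
  ultimately have "grad x \<bullet> (y - x) * (1 - 0) \<le> h 1 - h 0"
    by (intro convex_on_imp_above_tangent) auto
  then show ?thesis
    by (simp add: h_def)
qed

lemma smooth_convex_interpolation:
  fixes f :: "'a::real_inner \<Rightarrow> real"
  assumes convex: "convex_on UNIV f"
    and grad: "\<And>z. (f has_derivative (\<lambda>h. grad z \<bullet> h)) (at z)"
    and lips: "\<And>a b. norm (grad a - grad b) \<le> L * norm (a - b)"
    and "L > 0"
  shows "f x + grad x \<bullet> (y - x) + norm (grad y - grad x) ^ 2 / (2 * L) \<le> f y"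
proof -
  define g where "g = grad y - grad x"
  \<comment> \<open>\<open>w\<close> minimizes the bound \<open>g \<bullet> (w - y) + L / 2 * norm (w - y) ^ 2\<close> obtained below.\<close>
  define w where "w = y - (1 / L) *\<^sub>R g"
  have "f x + grad x \<bullet> (w - x) \<le> f w"
    by (rule convex_on_gradient_inequality[OF convex grad])
  also have "f w \<le> f y + grad y \<bullet> (w - y) + L / 2 * norm (w - y) ^ 2"
    by (rule lipschitz_gradient_upper_bound[OF grad lips])
  finally have "f x + grad x \<bullet> (y - x) \<le> f y + g \<bullet> (w - y) + L / 2 * norm (w - y) ^ 2"
    by (simp add: g_def inner_diff_left inner_diff_right)
  moreover have "g \<bullet> (w - y) + L / 2 * norm (w - y) ^ 2 = - (norm g ^ 2 / (2 * L))"
    using \<open>L > 0\<close>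
    by (simp only: w_def power2_norm_eq_inner) (simp add: power2_eq_square field_simps)
  ultimately show ?thesis
    by (simp add: g_def)
qed

lemma gradient_zero_at_minimizer:
  fixes f :: "'a::real_inner \<Rightarrow> real"
  assumes "(f has_derivative (\<lambda>h. g \<bullet> h)) (at x)" and "\<And>z. f x \<le> f z"
  shows "g = 0"
proof -
  have "(\<lambda>h. g \<bullet> h) = (\<lambda>h. 0)"
    using assms by (intro differential_zero_maxmin[of x UNIV]) auto
  then have "g \<bullet> g = 0"
    by meson
  then show ?thesis
    by simp
qed

lemma norm_sq_gradient_step:
  fixes p g :: "'a::real_inner"
  assumes "L > 0"
  shows "L / 4 * norm (p - (2 * t / L) *\<^sub>R g) ^ 2
    = L / 4 * norm p ^ 2 - t * (g \<bullet> p) + t ^ 2 * norm g ^ 2 / L"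
  using assms
  by (simp only: power2_norm_eq_inner)
    (simp add: inner_diff_left inner_diff_right inner_commute power2_eq_square field_simps)

section \<open>The optimized gradient method\<close>

locale theta_sequence =
  fixes \<theta> :: "nat \<Rightarrow> real"
  assumes theta_0: "\<theta> 0 = 1"
    and theta_Suc_pos: "\<And>k. \<theta> (Suc k) > 0"
    and theta_Suc_sq: "\<And>k. \<theta> (Suc k) ^ 2 - \<theta> (Suc k) = \<theta> k ^ 2"
begin

lemma theta_ge_1: "\<theta> k \<ge> 1"
proof (cases k)
  case (Suc j)
  have "\<theta> (Suc j) * (\<theta> (Suc j) - 1) \<ge> 0"
    using theta_Suc_sq[of j] by (simp add: power2_eq_square algebra_simps)
  with theta_Suc_pos[of j] Suc show ?thesis
    by (simp add: zero_le_mult_iff)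
qed (simp add: theta_0)

lemma theta_pos: "\<theta> k > 0"
  using theta_ge_1[of k] by simp

end

locale optimized_gradient_method = theta_sequence \<theta> for \<theta> :: "nat \<Rightarrow> real" +
  fixes f :: "'a::real_inner \<Rightarrow> real" and grad :: "'a \<Rightarrow> 'a"
    and L :: real and xs :: 'a and x y :: "nat \<Rightarrow> 'a"
  assumes convex: "convex_on UNIV f"
    and has_grad: "\<And>z. (f has_derivative (\<lambda>h. grad z \<bullet> h)) (at z)"
    and grad_lipschitz: "\<And>a b. norm (grad a - grad b) \<le> L * norm (a - b)"
    and L_pos: "L > 0"
    and minimizer: "\<And>z. f xs \<le> f z"
    and y_Suc: "\<And>k. y (Suc k) = x k - (1 / L) *\<^sub>R grad (x k)"
    and x_Suc: "\<And>k. x (Suc k) = y (Suc k)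
                 + ((\<theta> k - 1) / \<theta> (Suc k)) *\<^sub>R (y (Suc k) - y k)
                 + (\<theta> k / \<theta> (Suc k)) *\<^sub>R (y (Suc k) - x k)"
begin

definition gap :: "nat \<Rightarrow> real" where
  "gap i = f (x i) - f xs - norm (grad (x i)) ^ 2 / (2 * L)"

definition z :: "nat \<Rightarrow> 'a" where
  "z i = \<theta> i *\<^sub>R x i - (\<theta> i - 1) *\<^sub>R y i"

definition lyapunov :: "nat \<Rightarrow> real" where
  "lyapunov i = \<theta> i ^ 2 * gap i + L / 4 * norm (z (Suc i) - xs) ^ 2"

lemma grad_minimizer: "grad xs = 0"
  using has_grad minimizer by (rule gradient_zero_at_minimizer)

lemma gap_le: "gap i \<le> grad (x i) \<bullet> (x i - xs) - norm (grad (x i)) ^ 2 / L"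
  using smooth_convex_interpolation[OF convex has_grad grad_lipschitz L_pos, of "x i" xs]
  by (simp add: gap_def grad_minimizer inner_diff_right)

lemma gap_Suc_le:
  "gap (Suc i) \<le> gap i + grad (x (Suc i)) \<bullet> (x (Suc i) - y (Suc i)) - norm (grad (x (Suc i))) ^ 2 / L"
proof -
  define g g' where "g = grad (x i)" and "g' = grad (x (Suc i))"
  have "f (x (Suc i)) + g' \<bullet> (x i - x (Suc i)) + norm (g - g') ^ 2 / (2 * L) \<le> f (x i)"
    unfolding g_def g'_def by (rule smooth_convex_interpolation[OF convex has_grad grad_lipschitz L_pos])
  moreover have "norm (g - g') ^ 2 / (2 * L) = norm g ^ 2 / (2 * L) - (g' \<bullet> g) / L + norm g' ^ 2 / (2 * L)"
    by (simp only: power2_norm_eq_inner)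
      (simp add: inner_diff_left inner_diff_right inner_commute add_divide_distrib diff_divide_distrib)
  moreover have "g' \<bullet> (x (Suc i) - y (Suc i)) = g' \<bullet> (x (Suc i) - x i) + (g' \<bullet> g) / L"
    by (simp add: y_Suc g_def inner_diff_right)
  moreover have "norm g' ^ 2 / L = norm g' ^ 2 / (2 * L) + norm g' ^ 2 / (2 * L)"
    by simp
  ultimately show ?thesis
    by (simp add: gap_def g_def [symmetric] g'_def [symmetric] inner_diff_right)
qed

lemma z_Suc: "z (Suc i) = z i - (2 * \<theta> i / L) *\<^sub>R grad (x i)"
proof -
  have "\<theta> (Suc i) *\<^sub>R x (Suc i)
      = \<theta> (Suc i) *\<^sub>R y (Suc i) + (\<theta> i - 1) *\<^sub>R (y (Suc i) - y i) + \<theta> i *\<^sub>R (y (Suc i) - x i)"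
    using theta_pos[of "Suc i"] by (simp add: x_Suc scaleR_add_right)
  then have "z (Suc i) = y (Suc i) + (\<theta> i - 1) *\<^sub>R (y (Suc i) - y i) + \<theta> i *\<^sub>R (y (Suc i) - x i)"
    by (simp add: z_def algebra_simps)
  also have "\<dots> = z i - (2 * \<theta> i / L) *\<^sub>R grad (x i)"
    by (simp add: y_Suc z_def algebra_simps flip: scaleR_add_left)
  finally show ?thesis .
qed

lemma lyapunov_0_le: "lyapunov 0 \<le> L / 4 * norm (x 0 - xs) ^ 2"
proof -
  have "z (Suc 0) - xs = (x 0 - xs) - (2 * \<theta> 0 / L) *\<^sub>R grad (x 0)"
    by (simp only: z_Suc) (simp add: z_def theta_0 algebra_simps)
  then have "L / 4 * norm (z (Suc 0) - xs) ^ 2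
      = L / 4 * norm (x 0 - xs) ^ 2 - \<theta> 0 * (grad (x 0) \<bullet> (x 0 - xs)) + \<theta> 0 ^ 2 * norm (grad (x 0)) ^ 2 / L"
    by (simp only: norm_sq_gradient_step[OF L_pos])
  with gap_le[of 0] show ?thesis
    unfolding lyapunov_def theta_0 power_one mult_1 by linarith
qed

text \<open>The weights \<open>\<theta> (Suc i) ^ 2 - \<theta> (Suc i) = \<theta> i ^ 2\<close> and \<open>\<theta> (Suc i)\<close> of the two interpolation
  inequalities are chosen so that their inner-product terms combine into one involving \<open>z (Suc i) - xs\<close>,
  which cancels against the expansion of the distance term.\<close>
lemma lyapunov_Suc_le: "lyapunov (Suc i) \<le> lyapunov i"
proof -
  define t g p where "t = \<theta> (Suc i)" and "g = grad (x (Suc i))" and "p = z (Suc i) - xs"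
  have t_pos: "t > 0" and t_sq: "t ^ 2 - t = \<theta> i ^ 2"
    by (simp_all add: t_def theta_pos theta_Suc_sq)
  have combine: "(t ^ 2 - t) *\<^sub>R (x (Suc i) - y (Suc i)) + t *\<^sub>R (x (Suc i) - xs) = t *\<^sub>R p"
    by (simp add: p_def z_def t_def algebra_simps power2_eq_square)
  have "t ^ 2 * gap (Suc i) = (t ^ 2 - t) * gap (Suc i) + t * gap (Suc i)"
    by (simp add: algebra_simps)
  also have "\<dots> \<le> (t ^ 2 - t) * (gap i + g \<bullet> (x (Suc i) - y (Suc i)) - norm g ^ 2 / L)
      + t * (g \<bullet> (x (Suc i) - xs) - norm g ^ 2 / L)"
    using gap_Suc_le[of i] gap_le[of "Suc i"] t_pos t_sq
    by (intro add_mono mult_left_mono) (simp_all add: g_def)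
  also have "\<dots> = \<theta> i ^ 2 * gap i + g \<bullet> ((t ^ 2 - t) *\<^sub>R (x (Suc i) - y (Suc i)) + t *\<^sub>R (x (Suc i) - xs))
      - t ^ 2 * norm g ^ 2 / L"
    by (simp add: t_sq [symmetric] inner_add_right algebra_simps diff_divide_distrib)
  also have "\<dots> = \<theta> i ^ 2 * gap i + t * (g \<bullet> p) - t ^ 2 * norm g ^ 2 / L"
    by (simp add: combine)
  finally have "t ^ 2 * gap (Suc i) \<le> \<theta> i ^ 2 * gap i + t * (g \<bullet> p) - t ^ 2 * norm g ^ 2 / L" .
  moreover have "L / 4 * norm (z (Suc (Suc i)) - xs) ^ 2
      = L / 4 * norm p ^ 2 - t * (g \<bullet> p) + t ^ 2 * norm g ^ 2 / L"
    using norm_sq_gradient_step[OF L_pos, of p t g]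
    by (simp add: z_Suc[of "Suc i"] p_def t_def g_def algebra_simps)
  ultimately show ?thesis
    unfolding lyapunov_def t_def p_def by linarith
qed

lemma lyapunov_le: "lyapunov i \<le> L / 4 * norm (x 0 - xs) ^ 2"
proof (induction i)
  case 0
  show ?case by (rule lyapunov_0_le)
next
  case (Suc i)
  with lyapunov_Suc_le[of i] show ?case by linarith
qed

lemma objective_gap_le_gap: "f (y (Suc k)) - f xs \<le> gap k"
  using gradient_step_decrease[OF has_grad grad_lipschitz L_pos, of "x k"]
  by (simp add: gap_def y_Suc)

theorem convergence_rate: "f (y (Suc k)) - f xs \<le> L * norm (x 0 - xs) ^ 2 / (4 * \<theta> k ^ 2)"
proof -
  have "0 \<le> L / 4 * norm (z (Suc k) - xs) ^ 2"
    using L_pos by simp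
  with lyapunov_le[of k] have "\<theta> k ^ 2 * gap k \<le> L / 4 * norm (x 0 - xs) ^ 2"
    unfolding lyapunov_def by linarith
  with theta_pos[of k] have "gap k \<le> L * norm (x 0 - xs) ^ 2 / (4 * \<theta> k ^ 2)"
    by (simp add: field_simps)
  with objective_gap_le_gap[of k] show ?thesis
    by linarith
qed

end

section \<open>Asymptotics of \<open>\<theta>\<close>\<close>

lemma sqrt_one_plus_square_minus_bounds:
  fixes u :: real
  assumes "u > 0"
  shows "0 \<le> sqrt (1 + u ^ 2) - u" and "sqrt (1 + u ^ 2) - u \<le> 1 / (2 * u)"
    and "1 / (2 * u) - (sqrt (1 + u ^ 2) - u) \<le> 1 / (8 * u ^ 3)"
proof -
  define w where "w = sqrt (1 + u ^ 2) - u"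
  have "u \<le> sqrt (1 + u ^ 2)"
    using real_sqrt_le_mono[of "u ^ 2" "1 + u ^ 2"] assms by simp
  then show w_nonneg: "0 \<le> sqrt (1 + u ^ 2) - u"
    by simp
  have "w * (w + 2 * u) = sqrt (1 + u ^ 2) ^ 2 - u ^ 2"
    by (simp add: w_def power2_eq_square algebra_simps)
  then have w_eq: "w * (w + 2 * u) = 1"
    by simp
  then have "w * (2 * u) = 1 - w ^ 2"
    by (simp add: algebra_simps power2_eq_square)
  then have "w * (2 * u) \<le> 1"
    by simp
  then show w_le: "sqrt (1 + u ^ 2) - u \<le> 1 / (2 * u)"
    using assms by (simp add: w_def field_simps)
  have "1 / (2 * u) - w = w ^ 2 / (2 * u)"
    using w_eq assms by (simp add: field_simps power2_eq_square)
  also have "\<dots> \<le> (1 / (2 * u)) ^ 2 / (2 * u)"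
    using w_le w_nonneg assms by (intro divide_right_mono power_mono) (simp_all add: w_def)
  also have "\<dots> = 1 / (8 * u ^ 3)"
    by (simp add: power2_eq_square power3_eq_cube)
  finally show "1 / (2 * u) - (sqrt (1 + u ^ 2) - u) \<le> 1 / (8 * u ^ 3)"
    by (simp add: w_def)
qed

lemma inverse_square_expansion_identity:
  fixes a s l :: real
  assumes "a \<noteq> 0" and "s \<noteq> 0"
  shows "1 / s ^ 2 - (1 / a ^ 2 - l / a ^ 3)
    = (3 * ((s - a) ^ 2 / s) - (s - a) ^ 3 / s ^ 2 - 2 * (s - a - l / 2)) / a ^ 3"
  using assms by (simp add: field_simps power2_eq_square power3_eq_cube)

lemma log_offset_eventually_bounds:
  fixes s :: "nat \<Rightarrow> real" and c :: real
  assumes lim: "(\<lambda>k. s k - (real k + c) - ln (real k) / 2) \<longlonglongrightarrow> 0"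
  shows "eventually (\<lambda>k. \<bar>s k - (real k + c)\<bar> \<le> ln (real k) + 1 \<and> real k \<le> s k
    \<and> 0 < real k + c \<and> 1 \<le> real k) sequentially"
proof -
  have "filterlim (\<lambda>k. ln (real k) / 2) at_top sequentially"
    by real_asymp
  then have "eventually (\<lambda>k. \<bar>c\<bar> + 1 \<le> ln (real k) / 2) sequentially"
    by (rule filterlim_at_top [THEN iffD1, rule_format])
  moreover have "eventually (\<lambda>k. \<bar>s k - (real k + c) - ln (real k) / 2\<bar> < 1 / 2) sequentially"
    using order_tendstoD(2)[OF tendsto_rabs[OF lim], of "1 / 2"] by simp
  moreover have "eventually (\<lambda>k. 1 \<le> real k) sequentially"
    using eventually_ge_at_top[of "1::nat"] by (auto elim: eventually_mono)
  ultimately show ?thesis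
  proof eventually_elim
    case (elim k)
    moreover from elim have "ln (real k) < real k"
      by simp
    ultimately show ?case
      using abs_ge_self[of c] abs_ge_minus_self[of c] unfolding abs_less_iff abs_le_iff
      by linarith
  qed
qed

lemma log_bounded_power_ratios_tendsto_0:
  fixes e s :: "nat \<Rightarrow> real"
  assumes bounds: "eventually (\<lambda>k. \<bar>e k\<bar> \<le> ln (real k) + 1 \<and> real k \<le> s k \<and> 1 \<le> real k) sequentially"
  shows "(\<lambda>k. e k ^ 2 / s k) \<longlonglongrightarrow> 0" and "(\<lambda>k. e k ^ 3 / s k ^ 2) \<longlonglongrightarrow> 0"
proof -
  show "(\<lambda>k. e k ^ 2 / s k) \<longlonglongrightarrow> 0"
  proof (rule Lim_null_comparison)
    show "eventually (\<lambda>k. norm (e k ^ 2 / s k) \<le> (ln (real k) + 1) ^ 2 / real k) sequentially"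
      using bounds
    proof eventually_elim
      case (elim k)
      then have "norm (e k ^ 2 / s k) = \<bar>e k\<bar> ^ 2 / s k"
        by (simp add: power_abs)
      also have "\<dots> \<le> (ln (real k) + 1) ^ 2 / real k"
        using elim by (intro frac_le power_mono) auto
      finally show ?case .
    qed
    show "(\<lambda>k. (ln (real k) + 1) ^ 2 / real k) \<longlonglongrightarrow> 0"
      by real_asymp
  qed
  show "(\<lambda>k. e k ^ 3 / s k ^ 2) \<longlonglongrightarrow> 0"
  proof (rule Lim_null_comparison)
    show "eventually (\<lambda>k. norm (e k ^ 3 / s k ^ 2) \<le> (ln (real k) + 1) ^ 3 / real k ^ 2) sequentially"
      using bounds
    proof eventually_elim
      case (elim k)
      then have "norm (e k ^ 3 / s k ^ 2) = \<bar>e k\<bar> ^ 3 / s k ^ 2"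
        by (simp add: power_abs)
      also have "\<dots> \<le> (ln (real k) + 1) ^ 3 / real k ^ 2"
        using elim by (intro frac_le power_mono) auto
      finally show ?case .
    qed
    show "(\<lambda>k. (ln (real k) + 1) ^ 3 / real k ^ 2) \<longlonglongrightarrow> 0"
      by real_asymp
  qed
qed

lemma inverse_square_log_expansion:
  fixes s :: "nat \<Rightarrow> real" and c :: real
  assumes lim: "(\<lambda>k. s k - (real k + c) - ln (real k) / 2) \<longlonglongrightarrow> 0"
  shows "(\<lambda>k. 1 / s k ^ 2 - (1 / (real k + c) ^ 2 - ln (real k) / (real k + c) ^ 3))
    \<in> o(\<lambda>k. 1 / real k ^ 3)"
proof -
  define e where "e k = s k - (real k + c)" for k
  have bounds: "eventually (\<lambda>k. \<bar>e k\<bar> \<le> ln (real k) + 1 \<and> real k \<le> s k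
      \<and> 0 < real k + c \<and> 1 \<le> real k) sequentially"
    unfolding e_def by (rule log_offset_eventually_bounds[OF lim])
  from bounds have "eventually (\<lambda>k. \<bar>e k\<bar> \<le> ln (real k) + 1 \<and> real k \<le> s k \<and> 1 \<le> real k)
      sequentially"
    by (auto elim: eventually_mono)
  note ratios = log_bounded_power_ratios_tendsto_0[OF this]
  have "(\<lambda>k. real k / (real k + c)) \<longlonglongrightarrow> 1"
    by real_asymp
  moreover have "(\<lambda>k. e k - ln (real k) / 2) \<longlonglongrightarrow> 0"
    using lim by (simp add: e_def)
  ultimately have "(\<lambda>k. (real k / (real k + c)) ^ 3
      * (3 * (e k ^ 2 / s k) - e k ^ 3 / s k ^ 2 - 2 * (e k - ln (real k) / 2)))
      \<longlonglongrightarrow> 1 ^ 3 * (3 * 0 - 0 - 2 * 0)"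
    by (intro tendsto_intros ratios)
  moreover have "eventually (\<lambda>k. (real k / (real k + c)) ^ 3
      * (3 * (e k ^ 2 / s k) - e k ^ 3 / s k ^ 2 - 2 * (e k - ln (real k) / 2))
      = (1 / s k ^ 2 - (1 / (real k + c) ^ 2 - ln (real k) / (real k + c) ^ 3)) / (1 / real k ^ 3))
      sequentially"
    using bounds
  proof eventually_elim
    case (elim k)
    then have "real k + c \<noteq> 0" and "s k \<noteq> 0"
      by auto
    then show ?case
      unfolding e_def inverse_square_expansion_identity[OF \<open>real k + c \<noteq> 0\<close> \<open>s k \<noteq> 0\<close>]
      by (simp add: power_divide)
  qed
  ultimately have "(\<lambda>k. (1 / s k ^ 2 - (1 / (real k + c) ^ 2 - ln (real k) / (real k + c) ^ 3))
      / (1 / real k ^ 3)) \<longlonglongrightarrow> 0"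
    by (simp add: Lim_transform_eventually)
  then show ?thesis
    by (rule smalloI_tendsto) (use bounds in \<open>auto elim: eventually_mono\<close>)
qed

context theta_sequence
begin

lemma two_theta_Suc: "2 * \<theta> (Suc k) = 1 + sqrt (1 + (2 * \<theta> k) ^ 2)"
proof -
  have "(2 * \<theta> (Suc k) - 1) ^ 2 = 1 + (2 * \<theta> k) ^ 2"
    using theta_Suc_sq[of k] by (simp add: power2_eq_square algebra_simps)
  moreover have "0 \<le> 2 * \<theta> (Suc k) - 1"
    using theta_ge_1[of "Suc k"] by simp
  ultimately show ?thesis
    using real_sqrt_unique by fastforce
qed

lemma two_theta_lower: "real k + 2 \<le> 2 * \<theta> k"
proof (induction k)
  case 0
  show ?case by (simp add: theta_0)
next
  case (Suc k)
  with two_theta_Suc[of k] sqrt_one_plus_square_minus_bounds(1)[of "2 * \<theta> k"] theta_pos[of k]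
  show ?case by simp
qed

lemma two_theta_upper: "2 * \<theta> k \<le> real k + 2 + ln (real k + 1)"
proof (induction k)
  case 0
  show ?case by (simp add: theta_0)
next
  case (Suc k)
  have "2 * \<theta> (Suc k) - 2 * \<theta> k - 1 \<le> 1 / (2 * (2 * \<theta> k))"
    using two_theta_Suc[of k] sqrt_one_plus_square_minus_bounds(2)[of "2 * \<theta> k"] theta_pos[of k]
    by simp
  also have "\<dots> \<le> 1 / (real k + 2)"
    using two_theta_lower[of k] by (intro divide_left_mono) auto
  also have "\<dots> \<le> ln (real k + 2) - ln (real k + 1)"
    using ln_diff_le[of "real k + 1" "real k + 2"] by (simp add: field_simps)
  finally show ?case
    using Suc by (simp add: algebra_simps)
qed

lemma theta_offset_increment_bound:
  assumes "k \<ge> 1"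
  shows "\<bar>2 * \<theta> (Suc k) - 2 * \<theta> k - 1 - (ln (real k + 1) - ln (real k)) / 2\<bar>
    \<le> 1 / (8 * real k ^ 3) + (2 + ln (real k + 1)) / (2 * real k ^ 2)
      + \<bar>1 / (2 * real k) - (ln (real k + 1) - ln (real k)) / 2\<bar>"
proof -
  define u w l where "u = 2 * \<theta> k" and "w = 2 * \<theta> (Suc k) - 2 * \<theta> k - 1"
    and "l = (ln (real k + 1) - ln (real k)) / 2"
  have k_pos: "real k > 0"
    using assms by simp
  have u_lower: "real k + 2 \<le> u" and u_upper: "u \<le> real k + 2 + ln (real k + 1)"
    using two_theta_lower[of k] two_theta_upper[of k] by (simp_all add: u_def)
  have w_eq: "w = sqrt (1 + u ^ 2) - u"
    by (simp add: w_def u_def two_theta_Suc)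
  have "0 \<le> 1 / (2 * u) - w" and "1 / (2 * u) - w \<le> 1 / (8 * u ^ 3)"
    unfolding w_eq using sqrt_one_plus_square_minus_bounds(2,3)[of u] u_lower k_pos by simp_all
  moreover have "1 / (8 * u ^ 3) \<le> 1 / (8 * real k ^ 3)"
    using u_lower k_pos by (intro divide_left_mono mult_left_mono power_mono) auto
  moreover have "1 / (2 * real k) - 1 / (2 * u) = (u - real k) / (2 * u * real k)"
    using u_lower k_pos by (simp add: field_simps)
  moreover have "0 \<le> (u - real k) / (2 * u * real k)"
    using u_lower k_pos by simp
  moreover have "(u - real k) / (2 * u * real k) \<le> (2 + ln (real k + 1)) / (2 * real k ^ 2)"
    using u_lower u_upper k_pos
    by (intro frac_le) (auto simp: power2_eq_square intro!: mult_right_mono)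
  moreover have "- \<bar>1 / (2 * real k) - l\<bar> \<le> 1 / (2 * real k) - l"
    and "1 / (2 * real k) - l \<le> \<bar>1 / (2 * real k) - l\<bar>"
    by simp_all
  ultimately show ?thesis
    unfolding w_def [symmetric] l_def [symmetric] abs_le_iff by linarith
qed

lemma theta_offset_tendsto_zeta:
  "(\<lambda>k. 2 * \<theta> k - real k - 1 - ln (real k) / 2) \<longlonglongrightarrow> fista_zeta \<theta>"
proof -
  define d where "d k = 2 * \<theta> k - real k - 1 - ln (real k) / 2" for k
  define B where "B k = 1 / (8 * real k ^ 3) + (2 + ln (real k + 1)) / (2 * real k ^ 2)
      + \<bar>1 / (2 * real k) - (ln (real k + 1) - ln (real k)) / 2\<bar>" for k
  have d_Suc: "d (Suc k) - d k = 2 * \<theta> (Suc k) - 2 * \<theta> k - 1 - (ln (real k + 1) - ln (real k)) / 2"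
    for k
    by (simp add: d_def algebra_simps diff_divide_distrib)
  have "eventually (\<lambda>k. norm (d (Suc k) - d k) \<le> B k) sequentially"
    using eventually_ge_at_top[of 1]
  proof eventually_elim
    case (elim k)
    show ?case
      unfolding real_norm_def d_Suc B_def by (rule theta_offset_increment_bound[OF elim])
  qed
  moreover have "eventually (\<lambda>k. B k \<le> real k powr (-3/2)) sequentially"
    unfolding B_def by real_asymp
  ultimately have "eventually (\<lambda>k. norm (d (Suc k) - d k) \<le> real k powr (-3/2)) sequentially"
    by eventually_elim simp
  then have "summable (\<lambda>k. d (Suc k) - d k)"
    by (rule summable_comparison_test_ev) (simp add: summable_real_powr_iff)
  then have "convergent d"
    by (simp add: summable_iff_convergent sum_lessThan_telescope convergent_diff_const_right_iff)
  then show ?thesis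
    by (simp add: convergent_LIMSEQ_iff fista_zeta_def d_def [abs_def])
qed

lemma two_theta_expansion:
  "(\<lambda>k. 1 / (2 * \<theta> (k - 1)) ^ 2
      - (1 / (real k + fista_zeta \<theta>) ^ 2 - ln (real k) / (real k + fista_zeta \<theta>) ^ 3))
    \<in> o(\<lambda>k. 1 / real k ^ 3)"
proof (rule inverse_square_log_expansion)
  have "(\<lambda>k. 2 * \<theta> (k - 1) - real (k - 1) - 1 - ln (real (k - 1)) / 2) \<longlonglongrightarrow> fista_zeta \<theta>"
    by (rule seq_offset_neg[OF theta_offset_tendsto_zeta])
  moreover have "(\<lambda>k. ln (real k - 1) - ln (real k)) \<longlonglongrightarrow> 0"
    by real_asymp
  ultimately have "(\<lambda>k. (2 * \<theta> (k - 1) - real (k - 1) - 1 - ln (real (k - 1)) / 2 - fista_zeta \<theta>)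
      + (ln (real k - 1) - ln (real k)) / 2) \<longlonglongrightarrow> fista_zeta \<theta> - fista_zeta \<theta> + 0 / 2"
    by (intro tendsto_add tendsto_diff tendsto_divide tendsto_const) simp_all
  moreover have "eventually (\<lambda>k. (2 * \<theta> (k - 1) - real (k - 1) - 1 - ln (real (k - 1)) / 2 - fista_zeta \<theta>)
      + (ln (real k - 1) - ln (real k)) / 2
      = 2 * \<theta> (k - 1) - (real k + fista_zeta \<theta>) - ln (real k) / 2) sequentially"
    using eventually_ge_at_top[of 1]
    by eventually_elim (simp add: of_nat_diff algebra_simps diff_divide_distrib)
  ultimately have "(\<lambda>k. 2 * \<theta> (k - 1) - (real k + fista_zeta \<theta>) - ln (real k) / 2)
      \<longlonglongrightarrow> fista_zeta \<theta> - fista_zeta \<theta> + 0 / 2"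
    by (rule Lim_transform_eventually)
  then show "(\<lambda>k. 2 * \<theta> (k - 1) - (real k + fista_zeta \<theta>) - ln (real k) / 2) \<longlonglongrightarrow> 0"
    by simp
qed

end

theorem corollary1:
  fixes f :: "real ^ 'n \<Rightarrow> real" and grad :: "real ^ 'n \<Rightarrow> real ^ 'n"
    and L :: real and xs :: "real ^ 'n"
    and \<theta> :: "nat \<Rightarrow> real" and x y :: "nat \<Rightarrow> real ^ 'n"
  assumes conv: "convex_on UNIV f"
    and grad: "\<And>z. (f has_derivative (\<lambda>h. grad z \<bullet> h)) (at z)"
    and lips: "\<And>a b. norm (grad a - grad b) \<le> L * norm (a - b)"
    and Lpos: "L > 0"
    and minim: "\<And>z. f xs \<le> f z"
    and th0: "\<theta> 0 = 1"
    and thpos: "\<And>k. \<theta> (Suc k) > 0"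
    and threc: "\<And>k. \<theta> (Suc k) ^ 2 - \<theta> (Suc k) = \<theta> k ^ 2"
    and y0: "y 0 = x 0"
    and yrec: "\<And>k. y (Suc k) = x k - (1 / L) *\<^sub>R grad (x k)"
    and xrec: "\<And>k. x (Suc k) = y (Suc k)
                 + ((\<theta> k - 1) / \<theta> (Suc k)) *\<^sub>R (y (Suc k) - y k)
                 + (\<theta> k / \<theta> (Suc k)) *\<^sub>R (y (Suc k) - x k)"
  shows "(\<forall>k\<ge>1. f (y k) - f xs \<le> L * norm (x 0 - xs) ^ 2 / (4 * \<theta> (k - 1) ^ 2))
    \<and> (\<lambda>k. L * norm (x 0 - xs) ^ 2 / (4 * \<theta> (k - 1) ^ 2)
           - (L * norm (x 0 - xs) ^ 2 / (real k + fista_zeta \<theta>) ^ 2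
              - L * norm (x 0 - xs) ^ 2 * ln (real k) / (real k + fista_zeta \<theta>) ^ 3))
       \<in> o(\<lambda>k. 1 / real k ^ 3)"
proof -
  interpret optimized_gradient_method \<theta> f grad L xs x y
    by unfold_locales (fact th0 thpos threc conv grad lips Lpos minim yrec xrec)+
  let ?K = "L * norm (x 0 - xs) ^ 2"
  have "f (y k) - f xs \<le> ?K / (4 * \<theta> (k - 1) ^ 2)" if "k \<ge> 1" for k
  proof -
    from that obtain j where "k = Suc j"
      by (cases k) auto
    with convergence_rate[of j] show ?thesis
      by simp
  qed
  moreover have "(\<lambda>k. ?K * (1 / (2 * \<theta> (k - 1)) ^ 2
      - (1 / (real k + fista_zeta \<theta>) ^ 2 - ln (real k) / (real k + fista_zeta \<theta>) ^ 3)))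
    \<in> o(\<lambda>k. 1 / real k ^ 3)"
    using two_theta_expansion by simp
  ultimately show ?thesis
    by (simp add: power_mult_distrib right_diff_distrib)
qed

end
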